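(* In the exploration process and with the random variables $M(t,i)$ described in the context, the sequence of random variables $$M(0,n-a),\,M(1,1),\dots,M(1,n-a),\,M(2,1),\dots,M(n,n-a)$$ (indexed in lexicographic order of $(t,i)$) forms a martingale with respect to the filtration it generates.
   Context: Let $r\ge2$, $0<p<1$, and consider the random graph $G(n,p)$ on $[n]$ (each edge independently present with probability $p$). Let the initially infected set be $\mathcal{A}(0)=\{1,\dots,a\}$. Exploration process: set $\mathcal{Z}(0)=\emptyset$. For each step $t=1,\dots,n$: if $\mathcal{A}(t-1)\setminus\mathcal{Z}(t-1)\neq\emptyset$, pick a vertex $u_t$ in it by an arbitrary rule and set $\mathcal{Z}(t)=\mathcal{Z}(t-1)\cup\{u_t\}$; otherwise $\mathcal{Z}(t)=\mathcal{Z}(t-1)$. For $t\ge0$ and $i\in[n-a]$ let $X(t,i)$ be the indicator that vertex $a+i$ has at least $r$ neighbours in $\mathcal{Z}(t)$, and set $\mathcal{A}(t)=\mathcal{A}(0)\cup\{a+i: X(t,i)=1,\ i\in[n-a]\}$. Let $T$ be the smallest $t$ with $\mathcal{A}(t)=\mathcal{Z}(t)$ (equivalently $|\mathcal{A}(t)|=t$); $\mathcal{A}(T)$ is the final infected set of bootstrap percolation with threshold $r$. Let $\hat\pi(t)=\mathbb{P}[\mathrm{Bin}(t,p)\ge r]$ and define the random quantity $\pi(t)=\hat\pi(t)$ for $t\le T$ and $\pi(t)=\hat\pi(T)$ for $t>T$. Each step $t\ge1$ is divided into rounds $(t,1),\dots,(t,n-a)$, ordered lexicographically, preceded by $(0,n-a)$.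 For $(t,i)\ge(0,n-a)$ define $$M(t,i):=\sum_{j=1}^{i}\frac{X(t,j)-\pi(t)}{1-\pi(t)}+\sum_{j=i+1}^{n-a}\frac{X(t-1,j)-\pi(t-1)}{1-\pi(t-1)}.$$ *)

theory Defs
  imports "HOL-Probability.Probability"
begin

definition nat_filtration :: "'a measure \<Rightarrow> (nat \<Rightarrow> 'a \<Rightarrow> real) \<Rightarrow> nat \<Rightarrow> 'a measure" where
  "nat_filtration M Y k =
     sigma (space M) (\<Union>j\<in>{..k}. {Y j -` B \<inter> space M | B. B \<in> sets borel})"

definition martingale_upto :: "'a measure \<Rightarrow> (nat \<Rightarrow> 'a \<Rightarrow> real) \<Rightarrow> nat \<Rightarrow> bool" where
  "martingale_upto M Y N \<longleftrightarrow>
     (\<forall>k\<le>N. integrable M (Y k)) \<and>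
     (\<forall>k<N. AE \<omega> in M. real_cond_exp M (nat_filtration M Y k) (Y (Suc k)) \<omega> = Y k \<omega>)"

text \<open>A graph on [n] = {1..n} is encoded by its indicator on pairs (u,v) with u<v.\<close>
definition Gnp :: "nat \<Rightarrow> real \<Rightarrow> (nat \<times> nat \<Rightarrow> bool) pmf" where
  "Gnp n p = Pi_pmf {(u, v). 1 \<le> u \<and> u < v \<and> v \<le> n} False (\<lambda>_. bernoulli_pmf p)"

definition adj :: "(nat \<times> nat \<Rightarrow> bool) \<Rightarrow> nat \<Rightarrow> nat \<Rightarrow> bool" where
  "adj G u v \<longleftrightarrow> u \<noteq> v \<and> G (min u v, max u v)"

definition hasr :: "nat \<Rightarrow> (nat \<times> nat \<Rightarrow> bool) \<Rightarrow> nat set \<Rightarrow> nat \<Rightarrow> bool" where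
  "hasr r G Z v \<longleftrightarrow> card {w \<in> Z. adj G w v} \<ge> r"

definition Aset :: "nat \<Rightarrow> nat \<Rightarrow> nat \<Rightarrow> (nat \<times> nat \<Rightarrow> bool) \<Rightarrow> nat set \<Rightarrow> nat set" where
  "Aset n a r G Z = {1..a} \<union> {v. a + 1 \<le> v \<and> v \<le> n \<and> hasr r G Z v}"

text \<open>Z(t). The selection rule may depend on the step t and on the current sets Z(t-1), A(t-1);
  it must pick a vertex of A(t-1) - Z(t-1) whenever that set is nonempty.\<close>
fun Zset :: "nat \<Rightarrow> nat \<Rightarrow> nat \<Rightarrow> (nat \<Rightarrow> nat set \<Rightarrow> nat set \<Rightarrow> nat) \<Rightarrow>
    (nat \<times> nat \<Rightarrow> bool) \<Rightarrow> nat \<Rightarrow> nat set" where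
  "Zset n a r rule G 0 = {}"
| "Zset n a r rule G (Suc t) =
     (let Z = Zset n a r rule G t; A = Aset n a r G Z in
      if A - Z \<noteq> {} then insert (rule (Suc t) Z A) Z else Z)"

definition Ahat :: "nat \<Rightarrow> nat \<Rightarrow> nat \<Rightarrow> (nat \<Rightarrow> nat set \<Rightarrow> nat set \<Rightarrow> nat) \<Rightarrow>
    (nat \<times> nat \<Rightarrow> bool) \<Rightarrow> nat \<Rightarrow> nat set" where
  "Ahat n a r rule G t = Aset n a r G (Zset n a r rule G t)"

definition Xv :: "nat \<Rightarrow> nat \<Rightarrow> nat \<Rightarrow> (nat \<Rightarrow> nat set \<Rightarrow> nat set \<Rightarrow> nat) \<Rightarrow>
    (nat \<times> nat \<Rightarrow> bool) \<Rightarrow> nat \<Rightarrow> nat \<Rightarrow> real" where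
  "Xv n a r rule G t i = (if hasr r G (Zset n a r rule G t) (a + i) then 1 else 0)"

definition Tstop :: "nat \<Rightarrow> nat \<Rightarrow> nat \<Rightarrow> (nat \<Rightarrow> nat set \<Rightarrow> nat set \<Rightarrow> nat) \<Rightarrow>
    (nat \<times> nat \<Rightarrow> bool) \<Rightarrow> nat" where
  "Tstop n a r rule G = (LEAST t. Ahat n a r rule G t = Zset n a r rule G t)"

definition pihat :: "nat \<Rightarrow> real \<Rightarrow> nat \<Rightarrow> real" where
  "pihat r p t = measure_pmf.prob (binomial_pmf t p) {r..}"

definition piv :: "nat \<Rightarrow> nat \<Rightarrow> nat \<Rightarrow> real \<Rightarrow> (nat \<Rightarrow> nat set \<Rightarrow> nat set \<Rightarrow> nat) \<Rightarrow>
    (nat \<times> nat \<Rightarrow> bool) \<Rightarrow> nat \<Rightarrow> real" where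
  "piv n a r p rule G t = (if t \<le> Tstop n a r rule G then pihat r p t else pihat r p (Tstop n a r rule G))"

text \<open>M(t,i); for t = 0 (only used with i = n-a) the second sum is empty.\<close>
definition Mv :: "nat \<Rightarrow> nat \<Rightarrow> nat \<Rightarrow> real \<Rightarrow> (nat \<Rightarrow> nat set \<Rightarrow> nat set \<Rightarrow> nat) \<Rightarrow>
    (nat \<times> nat \<Rightarrow> bool) \<Rightarrow> nat \<Rightarrow> nat \<Rightarrow> real" where
  "Mv n a r p rule G t i =
     (\<Sum>j=1..i. (Xv n a r rule G t j - piv n a r p rule G t) / (1 - piv n a r p rule G t)) +
     (\<Sum>j=i+1..n-a. (Xv n a r rule G (t - 1) j - piv n a r p rule G (t - 1)) /
                      (1 - piv n a r p rule G (t - 1)))"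

text \<open>The sequence M(0,n-a), M(1,1), ..., M(1,n-a), M(2,1), ..., M(n,n-a), indexed by
  k = 0, ..., n(n-a): k = 0 is (0,n-a), and k = (t-1)(n-a) + i with 1 <= i <= n-a is (t,i).\<close>
definition Mseq :: "nat \<Rightarrow> nat \<Rightarrow> nat \<Rightarrow> real \<Rightarrow> (nat \<Rightarrow> nat set \<Rightarrow> nat set \<Rightarrow> nat) \<Rightarrow>
    nat \<Rightarrow> (nat \<times> nat \<Rightarrow> bool) \<Rightarrow> real" where
  "Mseq n a r p rule k G =
     (if k = 0 then Mv n a r p rule G 0 (n - a)
      else Mv n a r p rule G ((k - 1) div (n - a) + 1) ((k - 1) mod (n - a) + 1))"

end

theory Submission
  imports Defs
begin

text \<open>The step into round \<open>(t, i)\<close> concerns the single vertex \<open>v = a + i\<close>: \<open>M\<close> changes by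
  \<open>Y(t) - Y(t - 1)\<close>, where \<open>Y(s) = (X(s, i) - \<pi>(s)) / (1 - \<pi>(s))\<close> and \<open>\<pi>(s)\<close> is the probability
  that \<open>Bin(|Z(s)|, p) \<ge> r\<close>.  If \<open>v\<close> already has \<open>r\<close> neighbours in \<open>Z(t - 1)\<close>, the increment is
  \<open>1 - 1 = 0\<close>.  Otherwise \<open>v\<close> has not influenced the exploration so far, so deleting all edges
  at \<open>v\<close> changes none of the earlier values of \<open>M\<close>: the history is a function of the edges
  away from \<open>v\<close>.  These edges determine \<open>Z(t - 1) \<subseteq> Z(t)\<close>, and the edges at \<open>v\<close> are independent
  of them, so the numbers of neighbours of \<open>v\<close> in \<open>Z(t - 1)\<close> and \<open>Z(t)\<close> are binomial with
  parameters \<open>|Z(t - 1)|\<close> and \<open>|Z(t)|\<close>.  A two-line computation with two nested events then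
  shows that the increment has conditional expectation zero.\<close>

lemma expectation_normalized_indicator_increment:
  fixes P :: "'a pmf" and E F :: "'a set"
  defines "\<nu> S x \<equiv> (indicator S x - measure_pmf.prob P S) / (1 - measure_pmf.prob P S)"
  assumes "E \<subseteq> F" and "measure_pmf.prob P F < 1"
  shows "measure_pmf.expectation P (\<lambda>x. indicator (- E) x * (\<nu> F x - \<nu> E x)) = 0"
proof -
  let ?qE = "measure_pmf.prob P E" and ?qF = "measure_pmf.prob P F"
  define c where "c = ?qE / (1 - ?qE) - ?qF / (1 - ?qF)"
  have "?qE \<le> ?qF" using assms(2) by (rule measure_pmf.finite_measure_mono) simp
  then have qE: "?qE < 1" using assms(3) by linarith
  then have nz: "1 - ?qE \<noteq> 0" "1 - ?qF \<noteq> 0" using assms(3) by auto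
  have split: "indicator (- E) x * (\<nu> F x - \<nu> E x) =
      indicator (F - E) x / (1 - ?qF) + c * indicator (- E) x" for x
  proof -
    have "1 / (1 - ?qF) - ?qF / (1 - ?qF) = 1"
      using nz by (simp add: diff_divide_distrib[symmetric])
    then show ?thesis
      using assms(2) unfolding \<nu>_def c_def by (auto simp: indicator_def diff_divide_distrib)
  qed
  have int: "integrable (measure_pmf P) (indicator S :: 'a \<Rightarrow> real)" for S
    by (simp add: less_top[symmetric])
  have "measure_pmf.prob P (F - E) = ?qF - ?qE"
    using assms(2) by (intro measure_pmf.finite_measure_Diff) auto
  moreover have "measure_pmf.prob P (- E) = 1 - ?qE"
    using measure_pmf.prob_compl[of E P] by (simp add: Compl_eq_Diff_UNIV)
  ultimately have "measure_pmf.expectation P (\<lambda>x. indicator (- E) x * (\<nu> F x - \<nu> E x)) =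
      (?qF - ?qE) / (1 - ?qF) + c * (1 - ?qE)"
    unfolding split by (subst Bochner_Integration.integral_add) (auto intro: int)
  also have "\<dots> = 0"
    using assms(3) qE unfolding c_def by (simp add: divide_simps) (simp add: algebra_simps)
  finally show ?thesis .
qed

lemma finite_set_Pi_pmf:
  assumes "finite A" and "\<And>x. x \<in> A \<Longrightarrow> finite (set_pmf (q x))"
  shows "finite (set_pmf (Pi_pmf A d q))"
  by (rule finite_subset[OF set_Pi_pmf_subset'[OF assms(1)]]) (use assms in auto)

lemma expectation_pmf_cong:
  fixes f g :: "'a \<Rightarrow> real"
  assumes "\<And>x. x \<in> set_pmf P \<Longrightarrow> f x = g x"
  shows "measure_pmf.expectation P f = measure_pmf.expectation P g"
  by (rule integral_cong_AE) (auto simp: AE_measure_pmf_iff assms)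

lemma expectation_pair_pmf_finite:
  fixes H :: "'a \<times> 'b \<Rightarrow> real"
  assumes "finite (set_pmf A)" and "finite (set_pmf B)"
  shows "measure_pmf.expectation (pair_pmf A B) H =
    measure_pmf.expectation A (\<lambda>x. measure_pmf.expectation B (\<lambda>y. H (x, y)))"
proof -
  have inner: "measure_pmf.expectation B (\<lambda>y. H (x, y)) = (\<Sum>y\<in>set_pmf B. H (x, y) * pmf B y)" for x
    by (rule integral_measure_pmf_real) (use assms in auto)
  have "measure_pmf.expectation (pair_pmf A B) H =
      (\<Sum>z\<in>set_pmf A \<times> set_pmf B. H z * pmf (pair_pmf A B) z)"
    by (rule integral_measure_pmf_real) (use assms in auto)
  also have "\<dots> = (\<Sum>x\<in>set_pmf A. \<Sum>y\<in>set_pmf B. H (x, y) * pmf B y * pmf A x)"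
    unfolding sum.cartesian_product by (intro sum.cong) (auto simp: pmf_pair)
  also have "\<dots> = (\<Sum>x\<in>set_pmf A. (\<Sum>y\<in>set_pmf B. H (x, y) * pmf B y) * pmf A x)"
    by (simp add: sum_distrib_right)
  also have "\<dots> = measure_pmf.expectation A (\<lambda>x. measure_pmf.expectation B (\<lambda>y. H (x, y)))"
    unfolding inner by (rule integral_measure_pmf_real[symmetric]) (use assms in auto)
  finally show ?thesis .
qed

lemma
  shows space_nat_filtration: "space (nat_filtration M Y k) = space M"
    and sets_nat_filtration: "sets (nat_filtration M Y k) =
      sigma_sets (space M) (\<Union>j\<in>{..k}. {Y j -` B \<inter> space M | B. B \<in> sets borel})"
  unfolding nat_filtration_def by (auto intro!: space_measure_of sets_measure_of)

lemma subalgebra_nat_filtration: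
  assumes "\<And>j. j \<le> k \<Longrightarrow> Y j \<in> borel_measurable M"
  shows "subalgebra M (nat_filtration M Y k)"
  unfolding subalgebra_def space_nat_filtration sets_nat_filtration
  by (auto intro!: sets.sigma_sets_subset measurable_sets assms)

lemma measurable_nat_filtration: "j \<le> k \<Longrightarrow> Y j \<in> borel_measurable (nat_filtration M Y k)"
  by (rule measurableI)
    (auto simp: space_nat_filtration sets_nat_filtration intro!: sigma_sets.Basic)

lemma nat_filtration_saturated:
  assumes "A \<in> sets (nat_filtration M Y k)" "x \<in> A" "y \<in> space M" "\<forall>j\<le>k. Y j x = Y j y"
  shows "y \<in> A"
proof -
  have "A \<in> sigma_sets (space M) (\<Union>j\<in>{..k}. {Y j -` B \<inter> space M | B. B \<in> sets borel})"
    using assms(1) by (simp add: sets_nat_filtration)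
  then have "\<forall>x y. x \<in> A \<longrightarrow> y \<in> space M \<longrightarrow> (\<forall>j\<le>k. Y j x = Y j y) \<longrightarrow> y \<in> A"
  proof induction
    case (Basic a)
    then show ?case by auto
  next
    case (Compl a)
    show ?case
    proof (intro allI impI)
      fix x y assume "x \<in> space M - a" "y \<in> space M" "\<forall>j\<le>k. Y j x = Y j y"
      then show "y \<in> space M - a" using Compl.IH by (metis DiffE DiffI)
    qed
  next
    case (Union a)
    then show ?case by blast
  qed simp
  then show ?thesis using assms(2-4) by blast
qed

lemma martingale_upto_finite_pmfI:
  fixes P :: "'a pmf" and Y :: "nat \<Rightarrow> 'a \<Rightarrow> real"
  assumes fin: "finite (set_pmf P)"
    and increment: "\<And>k A. k < N \<Longrightarrow> (\<And>x y. x \<in> A \<Longrightarrow> \<forall>j\<le>k. Y j x = Y j y \<Longrightarrow> y \<in> A) \<Longrightarrow>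
        measure_pmf.expectation P (\<lambda>x. indicator A x * (Y (Suc k) x - Y k x)) = 0"
  shows "martingale_upto (measure_pmf P) Y N"
  unfolding martingale_upto_def
proof (intro conjI allI impI)
  have int: "integrable (measure_pmf P) f" for f :: "'a \<Rightarrow> real"
    by (rule integrable_measure_pmf_finite[OF fin])
  then show "integrable (measure_pmf P) (Y k)" for k .
  fix k assume "k < N"
  interpret finite_measure_subalgebra "measure_pmf P" "nat_filtration (measure_pmf P) Y k"
    by unfold_locales (auto intro: subalgebra_nat_filtration)
  show "AE x in measure_pmf P.
      real_cond_exp (measure_pmf P) (nat_filtration (measure_pmf P) Y k) (Y (Suc k)) x = Y k x"
  proof (rule real_cond_exp_charact)
    fix A assume "A \<in> sets (nat_filtration (measure_pmf P) Y k)"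
    then have "measure_pmf.expectation P (\<lambda>x. indicator A x * (Y (Suc k) x - Y k x)) = 0"
      using nat_filtration_saturated by (intro increment[OF \<open>k < N\<close>]) fastforce
    then show "(\<integral>x\<in>A. Y (Suc k) x \<partial>measure_pmf P) = (\<integral>x\<in>A. Y k x \<partial>measure_pmf P)"
      by (simp add: set_lebesgue_integral_def right_diff_distrib
          Bochner_Integration.integral_diff[OF int int])
  qed (auto intro: int measurable_nat_filtration)
qed

text \<open>Position \<open>k\<close> of a lexicographic sweep through an \<open>N\<close>-column table \<open>\<phi>\<close>: row \<open>k div N\<close>
  with its first \<open>k mod N\<close> entries replaced by those of the next row.  Columns are numbered from 1.\<close>
definition sweep :: "nat \<Rightarrow> (nat \<Rightarrow> nat \<Rightarrow> real) \<Rightarrow> nat \<Rightarrow> real" where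
  "sweep N \<phi> k = (\<Sum>j=1..k mod N. \<phi> (k div N + 1) j) + (\<Sum>j=k mod N + 1..N. \<phi> (k div N) j)"

lemma sweep_Suc:
  assumes "0 < N"
  shows "sweep N \<phi> (Suc k) - sweep N \<phi> k =
    \<phi> (k div N + 1) (k mod N + 1) - \<phi> (k div N) (k mod N + 1)"
proof (cases "Suc (k mod N) = N")
  case True
  then have "Suc k mod N = 0" "Suc k div N = k div N + 1" by (simp_all add: mod_Suc div_Suc)
  moreover have "(\<Sum>j=1..N. \<phi> (k div N + 1) j) =
      (\<Sum>j=1..k mod N. \<phi> (k div N + 1) j) + \<phi> (k div N + 1) N"
    using True sum.cl_ivl_Suc[of "\<phi> (k div N + 1)" 1 "k mod N"] by simp
  ultimately show ?thesis using True by (simp add: sweep_def)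
next
  case False
  then have "Suc k mod N = k mod N + 1" "Suc k div N = k div N" by (simp_all add: mod_Suc div_Suc)
  moreover have "Suc (k mod N) \<le> N" using assms by (simp add: Suc_leI)
  then have "(\<Sum>j=k mod N + 1..N. \<phi> (k div N) j) =
      \<phi> (k div N) (k mod N + 1) + (\<Sum>j=k mod N + 2..N. \<phi> (k div N) j)"
    by (subst sum.atLeast_Suc_atMost) auto
  ultimately show ?thesis by (simp add: sweep_def)
qed

lemma sweep_cong:
  assumes "0 < N" and "\<And>s j. 1 \<le> j \<Longrightarrow> j \<le> N \<Longrightarrow> s * N + j \<le> k + N \<Longrightarrow> \<phi> s j = \<psi> s j"
  shows "sweep N \<phi> k = sweep N \<psi> k"
proof -
  have k: "k = N * (k div N) + k mod N" by simp
  have "k mod N < N" using assms(1) by simp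
  then show ?thesis unfolding sweep_def
    by (intro arg_cong2[where f = "(+)"] sum.cong refl assms(2))
      (auto simp: algebra_simps, (use k in linarith)+)
qed

lemma Mseq_eq_sweep:
  "Mseq n a r p rule k G =
    sweep (n - a)
      (\<lambda>s j. (Xv n a r rule G s j - piv n a r p rule G s) / (1 - piv n a r p rule G s)) k"
proof (cases k)
  case 0
  then show ?thesis by (simp add: Mseq_def Mv_def sweep_def)
next
  case (Suc k')
  define N where "N = n - a"
  define T where
    "T = (\<lambda>s j. (Xv n a r rule G s j - piv n a r p rule G s) / (1 - piv n a r p rule G s))"
  have "Mseq n a r p rule k G =
      (\<Sum>j=1..k' mod N + 1. T (k' div N + 1) j) + (\<Sum>j=k' mod N + 2..N. T (k' div N) j)"
    unfolding Suc Mseq_def Mv_def N_def T_def by simp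
  also have "\<dots> = sweep N T k"
  proof (cases "Suc (k' mod N) = N")
    case True
    then have "k mod N = 0" "k div N = k' div N + 1"
      unfolding Suc by (simp_all add: mod_Suc div_Suc)
    with True show ?thesis by (simp add: sweep_def)
  next
    case False
    then have "k mod N = k' mod N + 1" "k div N = k' div N"
      unfolding Suc by (simp_all add: mod_Suc div_Suc)
    then show ?thesis by (simp add: sweep_def)
  qed
  finally show ?thesis unfolding N_def T_def .
qed

definition edges :: "nat \<Rightarrow> (nat \<times> nat) set" where
  "edges n = {(u, v). 1 \<le> u \<and> u < v \<and> v \<le> n}"

definition star :: "nat \<Rightarrow> nat \<Rightarrow> (nat \<times> nat) set" where
  "star n v = {e \<in> edges n. fst e = v \<or> snd e = v}"

definition isolate :: "nat \<Rightarrow> (nat \<times> nat \<Rightarrow> bool) \<Rightarrow> nat \<times> nat \<Rightarrow> bool" where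
  "isolate v G e \<longleftrightarrow> fst e \<noteq> v \<and> snd e \<noteq> v \<and> G e"

lemma finite_edges: "finite (edges n)"
  by (rule finite_subset[of _ "{0..n} \<times> {0..n}"]) (auto simp: edges_def)

lemma finite_star: "finite (star n v)"
  using finite_edges by (simp add: star_def)

lemma Gnp_eq_Pi_pmf: "Gnp n p = Pi_pmf (edges n) False (\<lambda>_. bernoulli_pmf p)"
  by (simp add: Gnp_def edges_def)

lemma finite_set_Gnp: "finite (set_pmf (Gnp n p))"
  unfolding Gnp_eq_Pi_pmf by (intro finite_set_Pi_pmf finite_edges) simp

definition merge_star ::
    "nat \<Rightarrow> nat \<Rightarrow> (nat \<times> nat \<Rightarrow> bool) \<Rightarrow> (nat \<times> nat \<Rightarrow> bool) \<Rightarrow> nat \<times> nat \<Rightarrow> bool" where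
  "merge_star n v f g e = (if e \<in> edges n - star n v then f e else g e)"

lemma Gnp_split_star:
  "Gnp n p = map_pmf (\<lambda>(f, g). merge_star n v f g)
     (pair_pmf (Pi_pmf (edges n - star n v) False (\<lambda>_. bernoulli_pmf p))
               (Pi_pmf (star n v) False (\<lambda>_. bernoulli_pmf p)))"
proof -
  have "edges n = (edges n - star n v) \<union> star n v" by (auto simp: star_def)
  then have "Gnp n p = Pi_pmf ((edges n - star n v) \<union> star n v) False (\<lambda>_. bernoulli_pmf p)"
    by (simp only: Gnp_eq_Pi_pmf)
  also have "\<dots> = map_pmf (\<lambda>(f, g) e. if e \<in> edges n - star n v then f e else g e)
     (pair_pmf (Pi_pmf (edges n - star n v) False (\<lambda>_. bernoulli_pmf p))
               (Pi_pmf (star n v) False (\<lambda>_. bernoulli_pmf p)))"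
    by (rule Pi_pmf_union) (auto simp: finite_edges finite_star)
  finally show ?thesis by (simp add: merge_star_def[abs_def])
qed

lemma prob_hasr_star:
  assumes S: "S \<subseteq> {1..n}" "v \<notin> S" "1 \<le> v" "v \<le> n" and p: "0 \<le> p" "p \<le> 1"
  shows "measure_pmf.prob (Pi_pmf (star n v) False (\<lambda>_. bernoulli_pmf p)) {g. hasr r g S v} =
    pihat r p (card S)"
proof -
  define e where "e z = (min z v, max z v)" for z
  have inj: "inj_on e S"
    using S(2) by (auto simp: e_def min_def max_def inj_on_def split: if_splits)
  have star: "e ` S \<subseteq> star n v"
  proof
    fix x assume "x \<in> e ` S"
    then obtain z where "z \<in> S" "x = e z" by blast
    moreover have "z \<noteq> v" "1 \<le> z" "z \<le> n" using S \<open>z \<in> S\<close> by auto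
    ultimately show "x \<in> star n v"
      using S by (cases "z < v") (auto simp: e_def star_def edges_def min_def max_def)
  qed
  have count: "card {x \<in> e ` S. (if x \<in> e ` S then g x else False)} = card {z \<in> S. g (e z)}" for g
  proof -
    have "{x \<in> e ` S. (if x \<in> e ` S then g x else False)} = e ` {z \<in> S. g (e z)}" by auto
    then show ?thesis using inj by (simp add: card_image inj_on_subset)
  qed
  have "map_pmf (\<lambda>g. card {z \<in> S. g (e z)}) (Pi_pmf (star n v) False (\<lambda>_. bernoulli_pmf p)) =
      map_pmf (\<lambda>f. card {x \<in> e ` S. f x}) (Pi_pmf (e ` S) False (\<lambda>_. bernoulli_pmf p))"
    unfolding Pi_pmf_subset[OF finite_star star] by (simp add: pmf.map_comp o_def count)
  also have "\<dots> = binomial_pmf (card S) p"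
    by (rule binomial_pmf_altdef'[symmetric])
      (use S(1) p inj in \<open>auto simp: card_image finite_subset\<close>)
  finally have binomial: "map_pmf (\<lambda>g. card {z \<in> S. g (e z)})
      (Pi_pmf (star n v) False (\<lambda>_. bernoulli_pmf p)) = binomial_pmf (card S) p" .
  have "measure_pmf.prob (Pi_pmf (star n v) False (\<lambda>_. bernoulli_pmf p))
      ((\<lambda>g. card {z \<in> S. g (e z)}) -` {r..}) = pihat r p (card S)"
    unfolding pihat_def binomial[symmetric] measure_map_pmf ..
  moreover have "{w \<in> S. adj g w v} = {z \<in> S. g (e z)}" for g
    using S(2) by (auto simp: adj_def e_def)
  ultimately show ?thesis by (simp add: hasr_def vimage_def)
qed

lemma pihat_less_1:
  assumes "1 \<le> r" "0 \<le> p" "p < 1"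
  shows "pihat r p s < 1"
proof -
  let ?B = "binomial_pmf s p"
  have "pihat r p s \<le> measure_pmf.prob ?B (UNIV - {0})"
    unfolding pihat_def using assms(1) by (intro measure_pmf.finite_measure_mono) auto
  also have "\<dots> = 1 - (1 - p) ^ s"
    using measure_pmf.prob_compl[of "{0}" ?B] assms(2,3) by (simp add: measure_pmf_single)
  also have "\<dots> < 1" using assms(3) by simp
  finally show ?thesis .
qed

lemma hasr_mono:
  assumes "Z \<subseteq> Z'" "finite Z'" "hasr r G Z v"
  shows "hasr r G Z' v"
proof -
  have "card {w \<in> Z. adj G w v} \<le> card {w \<in> Z'. adj G w v}"
    using assms(1,2) by (intro card_mono) auto
  then show ?thesis using assms(3) unfolding hasr_def by linarith
qed

lemma Aset_mono: "Z \<subseteq> Z' \<Longrightarrow> finite Z' \<Longrightarrow> Aset n a r G Z \<subseteq> Aset n a r G Z'"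
  unfolding Aset_def using hasr_mono by blast

lemma adj_isolate: "adj (isolate v G) w u \<longleftrightarrow> adj G w u \<and> w \<noteq> v \<and> u \<noteq> v"
  unfolding adj_def isolate_def by (auto simp: min_def max_def)

lemma hasr_isolate:
  assumes "v \<notin> S" "w \<noteq> v"
  shows "hasr r (isolate v G) S w \<longleftrightarrow> hasr r G S w"
proof -
  have "{x \<in> S. adj (isolate v G) x w} = {x \<in> S. adj G x w}"
    using assms by (auto simp: adj_isolate)
  then show ?thesis unfolding hasr_def by simp
qed

lemma not_hasr_isolate: "1 \<le> r \<Longrightarrow> \<not> hasr r (isolate v G) S v"
  unfolding hasr_def adj_isolate by simp

lemma Aset_isolate:
  assumes "v \<notin> S" "\<not> hasr r G S v"
  shows "Aset n a r (isolate v G) S = Aset n a r G S"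
proof -
  have "1 \<le> r" using assms(2) by (auto simp: hasr_def)
  then have "hasr r (isolate v G) S w \<longleftrightarrow> hasr r G S w" for w
    using assms(2) hasr_isolate[OF assms(1)] not_hasr_isolate by (cases "w = v") blast+
  then show ?thesis unfolding Aset_def by simp
qed

lemma isolate_merge_star:
  assumes "\<And>e. e \<notin> edges n - star n v \<Longrightarrow> f e = False" and "\<And>e. e \<notin> star n v \<Longrightarrow> g e = False"
  shows "isolate v (merge_star n v f g) = f"
proof
  fix e
  show "isolate v (merge_star n v f g) e = f e"
  proof (cases "fst e = v \<or> snd e = v")
    case True
    then have "e \<notin> edges n - star n v" by (auto simp: star_def)
    with True show ?thesis using assms(1) by (auto simp: isolate_def)
  next
    case False
    then have "e \<in> star n v \<longleftrightarrow> False" by (simp add: star_def)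
    with False show ?thesis using assms by (auto simp: isolate_def merge_star_def)
  qed
qed

lemma hasr_merge_star: "hasr r (merge_star n v f g) S v \<longleftrightarrow> hasr r g S v"
proof -
  have "adj (merge_star n v f g) w v \<longleftrightarrow> adj g w v" for w
    by (auto simp: adj_def merge_star_def star_def min_def max_def)
  then show ?thesis unfolding hasr_def by simp
qed

lemma Zset_Suc_mono: "Zset n a r rule G s \<subseteq> Zset n a r rule G (Suc s)"
  by (auto simp: Let_def)

lemma Zset_mono: "s \<le> s' \<Longrightarrow> Zset n a r rule G s \<subseteq> Zset n a r rule G s'"
  using lift_Suc_mono_le[of "Zset n a r rule G", OF Zset_Suc_mono] by blast

lemma Zset_stop:
  assumes "Aset n a r G (Zset n a r rule G s) = Zset n a r rule G s"
  shows "Zset n a r rule G (s + d) = Zset n a r rule G s"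
  using assms by (induction d) (simp_all add: Let_def)

text \<open>The paper's \<open>(X - \<pi>) / (1 - \<pi>)\<close> for a vertex \<open>w\<close> and explored set \<open>S\<close>; by
  \<open>piv_eq_pihat_card\<close>, \<open>\<pi>(t)\<close> is \<open>pihat\<close> of \<open>|Z(t)|\<close>.\<close>
definition score :: "nat \<Rightarrow> real \<Rightarrow> (nat \<times> nat \<Rightarrow> bool) \<Rightarrow> nat set \<Rightarrow> nat \<Rightarrow> real" where
  "score r p G S w =
    ((if hasr r G S w then 1 else 0) - pihat r p (card S)) / (1 - pihat r p (card S))"

lemma score_merge_star: "score r p (merge_star n v f g) S v = score r p g S v"
  by (simp add: score_def hasr_merge_star)

locale exploration =
  fixes n a r :: nat and p :: real and rule :: "nat \<Rightarrow> nat set \<Rightarrow> nat set \<Rightarrow> nat"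
  assumes rule_picks: "\<And>t Z A. A - Z \<noteq> {} \<Longrightarrow> rule t Z A \<in> A - Z"
    and a_le_n: "a \<le> n" and r_pos: "1 \<le> r" and p_nonneg: "0 \<le> p" and p_less_1: "p < 1"
begin

abbreviation Z where "Z \<equiv> Zset n a r rule"
abbreviation T where "T \<equiv> Tstop n a r rule"

lemma Zset_subset: "Z G s \<subseteq> {1..n}"
proof (induction s)
  case (Suc s)
  let ?A = "Aset n a r G (Z G s)"
  have "?A \<subseteq> {1..n}" using a_le_n by (auto simp: Aset_def)
  then have "?A - Z G s \<noteq> {} \<Longrightarrow> rule (Suc s) (Z G s) ?A \<in> {1..n}" using rule_picks by blast
  with Suc show ?case by (auto simp: Let_def)
qed simp

lemma finite_Zset: "finite (Z G s)"
  using Zset_subset finite_subset by blast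

lemma Zset_subset_Aset: "Z G s \<subseteq> Aset n a r G (Z G s)"
proof (induction s)
  case (Suc s)
  let ?A = "Aset n a r G (Z G s)"
  have "?A \<subseteq> Aset n a r G (Z G (Suc s))"
    by (rule Aset_mono[OF Zset_Suc_mono finite_Zset])
  moreover have "?A - Z G s \<noteq> {} \<Longrightarrow> rule (Suc s) (Z G s) ?A \<in> ?A" using rule_picks by blast
  moreover have "Z G (Suc s) \<subseteq> insert (rule (Suc s) (Z G s) ?A) (Z G s)" by (auto simp: Let_def)
  moreover have "?A - Z G s = {} \<Longrightarrow> Z G (Suc s) = Z G s" by (simp add: Let_def)
  ultimately show ?case using Suc by blast
qed simp

lemma card_Zset_Suc:
  assumes "Aset n a r G (Z G s) \<noteq> Z G s"
  shows "card (Z G (Suc s)) = Suc (card (Z G s))"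
proof -
  let ?A = "Aset n a r G (Z G s)"
  have "?A - Z G s \<noteq> {}" using assms Zset_subset_Aset[of G s] by blast
  then have "rule (Suc s) (Z G s) ?A \<notin> Z G s"
    and "Z G (Suc s) = insert (rule (Suc s) (Z G s) ?A) (Z G s)"
    using rule_picks by (auto simp: Let_def)
  then show ?thesis by (simp add: finite_Zset)
qed

lemma Ahat_Tstop: "Ahat n a r rule G (T G) = Z G (T G)"
proof -
  have "\<exists>s. Ahat n a r rule G s = Z G s"
  proof (rule ccontr)
    assume "\<nexists>s. Ahat n a r rule G s = Z G s"
    then have "card (Z G s) = s" for s
      by (induction s) (simp_all add: Ahat_def card_Zset_Suc del: Zset.simps(2))
    moreover have "card (Z G (Suc n)) \<le> n"
      using card_mono[OF _ Zset_subset[of G "Suc n"]] by simp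
    ultimately show False by (metis Suc_n_not_le_n)
  qed
  then show ?thesis unfolding Tstop_def by (rule LeastI_ex)
qed

lemma card_Zset_before_stop: "s \<le> T G \<Longrightarrow> card (Z G s) = s"
proof (induction s)
  case (Suc s)
  then have "Ahat n a r rule G s \<noteq> Z G s" unfolding Tstop_def by (intro not_less_Least) simp
  with Suc show ?case by (simp add: Ahat_def card_Zset_Suc del: Zset.simps(2))
qed simp

lemma card_Zset: "card (Z G s) = min s (T G)"
proof (cases "s \<le> T G")
  case False
  then have "Z G s = Z G (T G)"
    using Zset_stop[where G = G and s = "T G" and d = "s - T G", OF Ahat_Tstop[unfolded Ahat_def]]
    by simp
  with False show ?thesis by (simp add: card_Zset_before_stop)
qed (simp add: card_Zset_before_stop)

lemma piv_eq_pihat_card: "piv n a r p rule G s = pihat r p (card (Z G s))"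
  by (simp add: piv_def card_Zset min_def)

lemma Zset_isolate_not_mem:
  assumes "a < v"
  shows "v \<notin> Z (isolate v G) s"
proof (induction s)
  case (Suc s)
  let ?Z = "Z (isolate v G) s"
  let ?A = "Aset n a r (isolate v G) ?Z"
  have nA: "v \<notin> ?A" using assms not_hasr_isolate[OF r_pos] unfolding Aset_def by auto
  show ?case
  proof (cases "?A - ?Z = {}")
    case True then show ?thesis using Suc by (simp add: Let_def)
  next
    case False
    then have "rule (Suc s) ?Z ?A \<in> ?A" using rule_picks by blast
    then have "rule (Suc s) ?Z ?A \<noteq> v" using nA by metis
    then show ?thesis using Suc False by (simp add: Let_def)
  qed
qed simp

lemma Zset_isolate_eq:
  assumes "a < v" and "\<And>s. s < t \<Longrightarrow> \<not> hasr r G (Z G s) v \<or> \<not> hasr r G (Z (isolate v G) s) v"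
  shows "Z (isolate v G) t = Z G t"
  using assms(2)
proof (induction t)
  case (Suc t)
  then have eq: "Z (isolate v G) t = Z G t" by simp
  then have "\<not> hasr r G (Z G t) v" using Suc.prems[of t] by auto
  moreover have "v \<notin> Z G t" using Zset_isolate_not_mem[OF assms(1), of G t] eq by simp
  ultimately have "Aset n a r (isolate v G) (Z G t) = Aset n a r G (Z G t)"
    by (simp add: Aset_isolate)
  then show ?case by (simp add: eq Let_def)
qed simp

lemma hasr_Zset_isolate_iff:
  assumes "a < v"
  shows "hasr r G (Z (isolate v G) t) v \<longleftrightarrow> hasr r G (Z G t) v"
proof -
  have eq: "Z (isolate v G) t = Z G t"
    if "\<not> hasr r G (Z G t) v \<or> \<not> hasr r G (Z (isolate v G) t) v"
  proof (rule Zset_isolate_eq[OF assms])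
    fix s assume "s < t"
    then show "\<not> hasr r G (Z G s) v \<or> \<not> hasr r G (Z (isolate v G) s) v"
      using that hasr_mono[OF Zset_mono finite_Zset] by (meson less_imp_le)
  qed
  show ?thesis
  proof (cases "hasr r G (Z G t) v \<and> hasr r G (Z (isolate v G) t) v")
    case False
    then show ?thesis using eq by simp
  qed blast
qed

lemma Zset_isolate_eq_upto:
  assumes "a < v" "\<not> hasr r G (Z G t) v" "s \<le> Suc t"
  shows "Z (isolate v G) s = Z G s"
proof (rule Zset_isolate_eq[OF assms(1)])
  fix s' assume "s' < s"
  then have "s' \<le> t" using assms(3) by simp
  then show "\<not> hasr r G (Z G s') v \<or> \<not> hasr r G (Z (isolate v G) s') v"
    using assms(2) hasr_mono[OF Zset_mono finite_Zset] by blast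
qed

lemma score_eq_1: "hasr r G S w \<Longrightarrow> score r p G S w = 1"
  using pihat_less_1[OF r_pos p_nonneg p_less_1, of "card S"] by (simp add: score_def)

lemma score_isolate:
  assumes "a < v" "\<not> hasr r G (Z G t) v" "s \<le> Suc t" "w \<noteq> v \<or> s \<le> t"
  shows "score r p (isolate v G) (Z (isolate v G) s) w = score r p G (Z G s) w"
proof -
  have eq: "Z (isolate v G) s = Z G s" by (rule Zset_isolate_eq_upto[OF assms(1-3)])
  have "hasr r (isolate v G) (Z G s) w \<longleftrightarrow> hasr r G (Z G s) w"
  proof (cases "w = v")
    case True
    with assms(4) have "\<not> hasr r G (Z G s) v"
      using assms(2) hasr_mono[OF Zset_mono finite_Zset] by blast
    with True show ?thesis using not_hasr_isolate[OF r_pos] by blast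
  next
    case False
    moreover have "v \<notin> Z G s" using Zset_isolate_not_mem[OF assms(1), of G s] eq by simp
    ultimately show ?thesis by (rule hasr_isolate[rotated])
  qed
  then show ?thesis by (simp add: score_def eq)
qed

lemma Mseq_eq_sweep_score:
  "Mseq n a r p rule k G = sweep (n - a) (\<lambda>s j. score r p G (Z G s) (a + j)) k"
  unfolding Mseq_eq_sweep Xv_def piv_eq_pihat_card score_def ..

lemma Mseq_isolate:
  assumes "0 < n - a" "j \<le> k" and v: "v = a + (k mod (n - a) + 1)"
    and not_hasr: "\<not> hasr r G (Z G (k div (n - a))) v"
  shows "Mseq n a r p rule j (isolate v G) = Mseq n a r p rule j G"
  unfolding Mseq_eq_sweep_score
proof (rule sweep_cong[OF assms(1)])
  define N q m where "N = n - a" and "q = k div N" and "m = k mod N"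
  have k: "k = q * N + m" unfolding q_def m_def by (rule div_mult_mod_eq[symmetric])
  have "m < N" using assms(1) by (simp add: N_def m_def)
  fix s i assume "1 \<le> i" "i \<le> n - a" "s * (n - a) + i \<le> j + (n - a)"
  then have i: "1 \<le> i" "i \<le> N" and s: "s * N + i \<le> q * N + m + N"
    using assms(2) unfolding N_def[symmetric] k by simp_all
  then have "s * N < (q + 2) * N" using \<open>m < N\<close> by (simp add: distrib_right)
  then have "s < q + 2" by (rule mult_less_cancel2[THEN iffD1, THEN conjunct2])
  then have "s \<le> Suc q" by simp
  moreover have "a + i \<noteq> v \<or> s \<le> q"
  proof (cases "s = Suc q")
    case True
    then have "i \<le> m" using s by simp
    then show ?thesis using v by (simp add: m_def N_def)
  qed (use \<open>s \<le> Suc q\<close> in simp)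
  ultimately show
    "score r p (isolate v G) (Z (isolate v G) s) (a + i) = score r p G (Z G s) (a + i)"
    using \<open>s \<le> Suc q\<close> v not_hasr by (intro score_isolate) (auto simp: N_def q_def)
qed

lemma score_increment_merge_star:
  assumes "a < v"
    and f: "\<And>e. e \<notin> edges n - star n v \<Longrightarrow> f e = False" and g: "\<And>e. e \<notin> star n v \<Longrightarrow> g e = False"
    and h: "\<And>G. \<not> hasr r G (Z G t) v \<Longrightarrow> h (isolate v G) = h G"
  defines "G \<equiv> merge_star n v f g"
  shows "h G * (score r p G (Z G (Suc t)) v - score r p G (Z G t) v) =
    h f * (indicator {g. \<not> hasr r g (Z f t) v} g *
      (score r p g (Z f (Suc t)) v - score r p g (Z f t) v))"
proof -
  have iso: "isolate v G = f" unfolding G_def using f g by (rule isolate_merge_star)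
  have "hasr r G (Z G t) v \<longleftrightarrow> hasr r G (Z f t) v"
    using hasr_Zset_isolate_iff[OF assms(1), of G t] unfolding iso by simp
  also have "\<dots> \<longleftrightarrow> hasr r g (Z f t) v" unfolding G_def by (rule hasr_merge_star)
  finally have hasr_iff: "hasr r G (Z G t) v \<longleftrightarrow> hasr r g (Z f t) v" .
  show ?thesis
  proof (cases "hasr r G (Z G t) v")
    case True
    moreover have "hasr r G (Z G (Suc t)) v"
      using True by (rule hasr_mono[OF Zset_Suc_mono finite_Zset])
    ultimately show ?thesis using hasr_iff by (simp add: score_eq_1)
  next
    case False
    have "Z G s = Z f s" if "s \<le> Suc t" for s
      using Zset_isolate_eq_upto[OF assms(1) False that] unfolding iso ..
    then have "Z G t = Z f t" "Z G (Suc t) = Z f (Suc t)" using le_SucI by blast+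
    moreover have "h G = h f" using h[OF False] unfolding iso ..
    moreover have "score r p G S v = score r p g S v" for S
      unfolding G_def by (rule score_merge_star)
    ultimately show ?thesis using False hasr_iff by (simp del: Zset.simps)
  qed
qed

lemma expectation_score_increment:
  assumes "a < v" "v \<le> n"
    and h: "\<And>G. \<not> hasr r G (Z G t) v \<Longrightarrow> h (isolate v G) = h G"
  shows "measure_pmf.expectation (Gnp n p)
    (\<lambda>G. h G * (score r p G (Z G (Suc t)) v - score r p G (Z G t) v)) = 0"
proof -
  let ?P1 = "Pi_pmf (edges n - star n v) False (\<lambda>_. bernoulli_pmf p)"
  let ?P2 = "Pi_pmf (star n v) False (\<lambda>_. bernoulli_pmf p)"
  let ?D = "\<lambda>f g. indicator {g. \<not> hasr r g (Z f t) v} g *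
    (score r p g (Z f (Suc t)) v - score r p g (Z f t) v)"
  have f_supp: "\<And>e. e \<notin> edges n - star n v \<Longrightarrow> f e = False" if "f \<in> set_pmf ?P1" for f
    using set_Pi_pmf_subset[OF finite_Diff[OF finite_edges[of n]], of "star n v" False] that
    by blast
  have g_supp: "\<And>e. e \<notin> star n v \<Longrightarrow> g e = False" if "g \<in> set_pmf ?P2" for g
    using set_Pi_pmf_subset[OF finite_star[of n v], of False] that by blast
  have inner: "measure_pmf.expectation ?P2 (?D f) = 0" if "f \<in> set_pmf ?P1" for f
  proof -
    have "isolate v (merge_star n v f (\<lambda>_. False)) = f"
      by (rule isolate_merge_star) (use f_supp[OF that] in auto)
    then have "v \<notin> Z f s" for s using Zset_isolate_not_mem[OF assms(1)] by metis
    then have prob: "measure_pmf.prob ?P2 {g. hasr r g (Z f s) v} = pihat r p (card (Z f s))" for s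
      using assms p_nonneg p_less_1 by (intro prob_hasr_star[OF Zset_subset]) auto
    then have score: "score r p g (Z f s) v =
        (indicator {g. hasr r g (Z f s) v} g - measure_pmf.prob ?P2 {g. hasr r g (Z f s) v}) /
        (1 - measure_pmf.prob ?P2 {g. hasr r g (Z f s) v})" for g s
      by (simp add: score_def del: Zset.simps)
    have "{g. hasr r g (Z f t) v} \<subseteq> {g. hasr r g (Z f (Suc t)) v}"
      using hasr_mono[OF Zset_Suc_mono finite_Zset] by blast
    moreover have "measure_pmf.prob ?P2 {g. hasr r g (Z f (Suc t)) v} < 1"
      unfolding prob by (rule pihat_less_1[OF r_pos p_nonneg p_less_1])
    ultimately show ?thesis
      unfolding score Collect_neg_eq by (rule expectation_normalized_indicator_increment)
  qed
  define \<Phi> where "\<Phi> G = h G * (score r p G (Z G (Suc t)) v - score r p G (Z G t) v)" for G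
  have "measure_pmf.expectation (Gnp n p) \<Phi> =
      measure_pmf.expectation ?P1 (\<lambda>f. measure_pmf.expectation ?P2 (\<lambda>g. \<Phi> (merge_star n v f g)))"
    unfolding Gnp_split_star[of n p v] integral_map_pmf
    by (simp add: expectation_pair_pmf_finite finite_set_Pi_pmf finite_edges finite_star
        case_prod_unfold)
  also have "\<dots> = measure_pmf.expectation ?P1 (\<lambda>f. h f * measure_pmf.expectation ?P2 (?D f))"
  proof (rule expectation_pmf_cong)
    fix f assume f: "f \<in> set_pmf ?P1"
    have "measure_pmf.expectation ?P2 (\<lambda>g. \<Phi> (merge_star n v f g)) =
        measure_pmf.expectation ?P2 (\<lambda>g. h f * ?D f g)"
    proof (rule expectation_pmf_cong)
      fix g assume "g \<in> set_pmf ?P2"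
      show "\<Phi> (merge_star n v f g) = h f * ?D f g"
        unfolding \<Phi>_def using f_supp[OF f] g_supp[OF \<open>g \<in> _\<close>] h
        by (rule score_increment_merge_star[OF assms(1)])
    qed
    then show "measure_pmf.expectation ?P2 (\<lambda>g. \<Phi> (merge_star n v f g)) =
        h f * measure_pmf.expectation ?P2 (?D f)"
      by simp
  qed
  also have "\<dots> = measure_pmf.expectation ?P1 (\<lambda>_. 0)"
    using inner by (intro expectation_pmf_cong) simp
  also have "\<dots> = 0" by simp
  finally show ?thesis unfolding \<Phi>_def .
qed

theorem martingale_Mseq: "martingale_upto (measure_pmf (Gnp n p)) (Mseq n a r p rule) (n * (n - a))"
proof (rule martingale_upto_finite_pmfI[OF finite_set_Gnp])
  fix k A
  assume k: "k < n * (n - a)"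
    and A: "\<And>x y. x \<in> A \<Longrightarrow> \<forall>j\<le>k. Mseq n a r p rule j x = Mseq n a r p rule j y \<Longrightarrow> y \<in> A"
  define q v where "q = k div (n - a)" and "v = a + (k mod (n - a) + 1)"
  have N: "0 < n - a" using k by (cases "n - a") auto
  then have "k mod (n - a) < n - a" by simp
  then have v: "a < v" "v \<le> n" using a_le_n by (auto simp: v_def)
  have increment: "Mseq n a r p rule (Suc k) G - Mseq n a r p rule k G =
      score r p G (Z G (Suc q)) v - score r p G (Z G q) v" for G
    unfolding Mseq_eq_sweep_score sweep_Suc[OF N] by (simp add: q_def v_def)
  have "indicator A (isolate v G) = (indicator A G :: real)" if "\<not> hasr r G (Z G q) v" for G
  proof -
    have "\<forall>j\<le>k. Mseq n a r p rule j (isolate v G) = Mseq n a r p rule j G"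
      using Mseq_isolate[OF N _ v_def] that by (simp add: q_def)
    then have "isolate v G \<in> A \<longleftrightarrow> G \<in> A" using A by (metis (no_types, lifting))
    then show ?thesis by (simp add: indicator_def)
  qed
  then show "measure_pmf.expectation (Gnp n p)
      (\<lambda>G. indicator A G * (Mseq n a r p rule (Suc k) G - Mseq n a r p rule k G)) = 0"
    unfolding increment by (rule expectation_score_increment[OF v])
qed

end

theorem lemma1:
  fixes n a r :: nat and p :: real
    and rule :: "nat \<Rightarrow> nat set \<Rightarrow> nat set \<Rightarrow> nat"
  assumes "2 \<le> r" and "0 < p" and "p < 1" and "a \<le> n"
    and "\<And>t Z A. A - Z \<noteq> {} \<Longrightarrow> rule t Z A \<in> A - Z"
  shows "martingale_upto (measure_pmf (Gnp n p)) (Mseq n a r p rule) (n * (n - a))"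
proof -
  interpret exploration n a r p rule
    using assms by unfold_locales auto
  show ?thesis by (rule martingale_Mseq)
qed

end
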